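(* Let $k$ be an algebraically closed field of characteristic zero and $0<l<n$. Let $Y,Z\subset\mathbb P^n$ be closed subvarieties with saturated homogeneous ideals $I_Y,I_Z\subset k[x_0,\dots,x_n]$, and let $X$ be defined by $I_X=I_Y\cap I_Z$. Suppose $Y\subset\{x_0=\cdots=x_{l-1}=0\}$ and $Z\subset\{x_{l+1}=\cdots=x_n=0\}$, and that $Y\cap Z\neq\emptyset$, so that $Y\cap Z=\{p\}$ where $p$ is the point whose only nonzero coordinate is $x_l$. Then for every monomial order $\prec$ on $k[x_0,\dots,x_n]$, \[ \mathrm{in}_\prec(I_X)=\langle\mathrm{in}_\prec(I_Y\cap k[x_l,\dots,x_n])\rangle+\langle\mathrm{in}_\prec(I_Z\cap k[x_0,\dots,x_l])\rangle+T, \] where $T=\langle x_0,\dots,x_{l-1}\rangle\langle x_{l+1},\dots,x_n\rangle$, $\mathrm{in}_\prec(I_Y\cap k[x_l,\dots,x_n])$ is computed in $k[x_l,\dots,x_n]$ (with the restricted order) and $\langle\cdot\rangle$ denotes the ideal it generates in $k[x_0,\dots,x_n]$; similarly for $Z$. *)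

theory Defs
  imports "HOL-Computational_Algebra.Polynomial" "HOL-Library.Poly_Mapping"
begin

text \<open>Multivariate polynomials over 'a in the variables x_0, x_1, ... (indexed by nat):
  a monomial is an exponent vector (nat with finite support), a polynomial is a finitely
  supported map from monomials to coefficients (multiplication = convolution).\<close>

type_synonym monom = "nat \<Rightarrow>\<^sub>0 nat"
type_synonym 'a mpol = "monom \<Rightarrow>\<^sub>0 'a"

definition Var :: "nat \<Rightarrow> 'a::{zero,one} mpol" where
  "Var i = Poly_Mapping.single (Poly_Mapping.single i 1) 1"

definition poly_in :: "nat set \<Rightarrow> 'a::zero mpol \<Rightarrow> bool" where
  "poly_in V f \<longleftrightarrow> (\<forall>m\<in>Poly_Mapping.keys f. Poly_Mapping.keys m \<subseteq> V)"

definition polyring :: "nat \<Rightarrow> 'a::zero mpol set" where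
  "polyring n = {f. poly_in {0..n} f}"

definition mdeg :: "monom \<Rightarrow> nat" where
  "mdeg m = (\<Sum>i\<in>Poly_Mapping.keys m. Poly_Mapping.lookup m i)"

definition homogeneous :: "'a::zero mpol \<Rightarrow> bool" where
  "homogeneous f \<longleftrightarrow> (\<exists>d. \<forall>m\<in>Poly_Mapping.keys f. mdeg m = d)"

definition eval :: "'a::comm_semiring_1 mpol \<Rightarrow> (nat \<Rightarrow> 'a) \<Rightarrow> 'a" where
  "eval f v = (\<Sum>m\<in>Poly_Mapping.keys f. Poly_Mapping.lookup f m * (\<Prod>i\<in>Poly_Mapping.keys m. v i ^ Poly_Mapping.lookup m i))"

text \<open>Points of P^n, represented by their (nonzero) homogeneous coordinate vectors
  (v_0,...,v_n); a subset of P^n is represented by the set of all its coordinate vectors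
  (its affine cone minus the origin).\<close>
definition proj_pts :: "nat \<Rightarrow> (nat \<Rightarrow> 'a::zero) set" where
  "proj_pts n = {v. (\<forall>i>n. v i = 0) \<and> v \<noteq> (\<lambda>_. 0)}"

definition proj_closed :: "nat \<Rightarrow> (nat \<Rightarrow> 'a::comm_semiring_1) set \<Rightarrow> bool" where
  "proj_closed n Y \<longleftrightarrow> (\<exists>S. S \<subseteq> polyring n \<and> (\<forall>f\<in>S. homogeneous f) \<and>
      Y = {v\<in>proj_pts n. \<forall>f\<in>S. eval f v = 0})"

definition vanishing_ideal :: "nat \<Rightarrow> (nat \<Rightarrow> 'a::comm_semiring_1) set \<Rightarrow> 'a mpol set" where
  "vanishing_ideal n Y = {f\<in>polyring n. \<forall>v\<in>Y. eval f v = 0}"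

definition is_ideal :: "nat \<Rightarrow> 'a::comm_ring_1 mpol set \<Rightarrow> bool" where
  "is_ideal n J \<longleftrightarrow> J \<subseteq> polyring n \<and> 0 \<in> J \<and> (\<forall>a\<in>J. \<forall>b\<in>J. a + b \<in> J) \<and>
      (\<forall>a\<in>J. \<forall>r\<in>polyring n. r * a \<in> J)"

definition ideal_gen :: "nat \<Rightarrow> 'a::comm_ring_1 mpol set \<Rightarrow> 'a mpol set" where
  "ideal_gen n G = \<Inter>{J. is_ideal n J \<and> G \<subseteq> J}"

definition ideal_sum :: "nat \<Rightarrow> 'a::comm_ring_1 mpol set \<Rightarrow> 'a mpol set \<Rightarrow> 'a mpol set" where
  "ideal_sum n A B = ideal_gen n (A \<union> B)"

definition ideal_prod :: "nat \<Rightarrow> 'a::comm_ring_1 mpol set \<Rightarrow> 'a mpol set \<Rightarrow> 'a mpol set" where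
  "ideal_prod n A B = ideal_gen n {a * b | a b. a \<in> A \<and> b \<in> B}"

definition monomial_order :: "nat \<Rightarrow> (monom \<Rightarrow> monom \<Rightarrow> bool) \<Rightarrow> bool" where
  "monomial_order n ord \<longleftrightarrow>
     (let M = {m. Poly_Mapping.keys m \<subseteq> {0..n}} in
       (\<forall>a\<in>M. ord a a) \<and>
       (\<forall>a\<in>M. \<forall>b\<in>M. ord a b \<and> ord b a \<longrightarrow> a = b) \<and>
       (\<forall>a\<in>M. \<forall>b\<in>M. \<forall>c\<in>M. ord a b \<and> ord b c \<longrightarrow> ord a c) \<and>
       (\<forall>a\<in>M. \<forall>b\<in>M. ord a b \<or> ord b a) \<and>
       (\<forall>a\<in>M. ord 0 a) \<and>
       (\<forall>a\<in>M. \<forall>b\<in>M. \<forall>c\<in>M. ord a b \<longrightarrow> ord (a + c) (b + c)))"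

definition lead_monom :: "(monom \<Rightarrow> monom \<Rightarrow> bool) \<Rightarrow> 'a::zero mpol \<Rightarrow> monom" where
  "lead_monom ord f = (THE m. m \<in> Poly_Mapping.keys f \<and> (\<forall>m'\<in>Poly_Mapping.keys f. ord m' m))"

definition initial_ideal ::
  "nat \<Rightarrow> (monom \<Rightarrow> monom \<Rightarrow> bool) \<Rightarrow> 'a::comm_ring_1 mpol set \<Rightarrow> 'a mpol set" where
  "initial_ideal n ord I =
     ideal_gen n {Poly_Mapping.single (lead_monom ord f) 1 | f. f \<in> I \<and> f \<noteq> 0}"

end

theory Submission
  imports Defs
begin

text \<open>A leading monomial of an element f of I_X either involves only x_l,...,x_n, or only
  x_0,...,x_l, or is divisible by some x_i x_j with i < l < j. In the first case the part of f
  supported on monomials in x_l,...,x_n still vanishes on Y, since every other monomial contains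
  a variable vanishing on Y, and it has the same leading monomial; symmetrically for Z.
  Conversely, an element g of I_Y in k[x_l,...,x_n] becomes a polynomial in x_l alone once
  x_(l+1),...,x_n are set to 0; it vanishes at all nonzero multiples of the point p in Y \<inter> Z,
  hence identically as k is infinite, so g vanishes on Z. Finally x_i x_j vanishes on Y and on Z.\<close>

lemma polyring_iff: "f \<in> polyring n \<longleftrightarrow> (\<forall>m\<in>Poly_Mapping.keys f. Poly_Mapping.keys m \<subseteq> {0..n})"
  by (simp add: polyring_def poly_in_def)

lemma polyring_add: "a \<in> polyring n \<Longrightarrow> b \<in> polyring n \<Longrightarrow> a + b \<in> polyring n"
  unfolding polyring_iff using keys_add[of a b] by blast

lemma polyring_mult:
  assumes "a \<in> polyring n" "b \<in> polyring n"
  shows "(a::'a::comm_semiring_1 mpol) * b \<in> polyring n"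
  unfolding polyring_iff
proof
  fix m assume "m \<in> Poly_Mapping.keys (a * b)"
  then obtain x y where "m = x + y" "x \<in> Poly_Mapping.keys a" "y \<in> Poly_Mapping.keys b"
    using keys_mult[of a b] by blast
  then show "Poly_Mapping.keys m \<subseteq> {0..n}"
    using assms keys_add[of x y] unfolding polyring_iff by blast
qed

lemma single_in_polyring: "Poly_Mapping.keys m \<subseteq> {0..n} \<Longrightarrow> Poly_Mapping.single m c \<in> polyring n"
  by (simp add: polyring_iff)

lemma Var_in_polyring: "i \<le> n \<Longrightarrow> Var i \<in> polyring n"
  by (simp add: Var_def polyring_iff)

lemma vanishing_ideal_subset_polyring: "vanishing_ideal n Y \<subseteq> polyring n"
  by (auto simp: vanishing_ideal_def)

lemma zero_in_polyring: "0 \<in> polyring n"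
  by (simp add: polyring_iff)

lemma is_ideal_polyring: "is_ideal n (polyring n :: 'a::comm_ring_1 mpol set)"
  by (simp add: is_ideal_def zero_in_polyring polyring_add polyring_mult)

lemma is_ideal_mult_left: "is_ideal n J \<Longrightarrow> a \<in> J \<Longrightarrow> r \<in> polyring n \<Longrightarrow> r * a \<in> J"
  by (simp add: is_ideal_def)

lemma is_ideal_ideal_gen:
  assumes "G \<subseteq> polyring n"
  shows "is_ideal n (ideal_gen n (G :: 'a::comm_ring_1 mpol set))"
proof -
  let ?F = "{J. is_ideal n J \<and> G \<subseteq> J}"
  have "polyring n \<in> ?F"
    using assms is_ideal_polyring by blast
  then have "\<Inter> ?F \<subseteq> polyring n"
    by blast
  then show ?thesis
    unfolding ideal_gen_def is_ideal_def[of n "\<Inter> ?F"] by (auto simp: is_ideal_def)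
qed

lemma ideal_gen_subset: "G \<subseteq> polyring n \<Longrightarrow> G \<subseteq> ideal_gen n (G :: 'a::comm_ring_1 mpol set)"
  by (auto simp: ideal_gen_def)

lemma ideal_gen_least: "is_ideal n J \<Longrightarrow> G \<subseteq> J \<Longrightarrow> ideal_gen n G \<subseteq> J"
  by (auto simp: ideal_gen_def)

lemma ideal_gen_mono: "G \<subseteq> H \<Longrightarrow> ideal_gen n G \<subseteq> ideal_gen n H"
  by (auto simp: ideal_gen_def)

lemma ideal_gen_subset_polyring:
  "G \<subseteq> polyring n \<Longrightarrow> ideal_gen n (G :: 'a::comm_ring_1 mpol set) \<subseteq> polyring n"
  by (rule ideal_gen_least[OF is_ideal_polyring])

lemma is_ideal_colon:
  assumes L: "is_ideal n L" and c: "c \<in> polyring n"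
  shows "is_ideal n {x\<in>polyring n. x * c \<in> (L :: 'a::comm_ring_1 mpol set)}"
  using L zero_in_polyring polyring_add polyring_mult
  by (auto simp: is_ideal_def distrib_right mult.assoc)

lemma ideal_gen_mult_mem:
  assumes L: "is_ideal n L" and A: "A \<subseteq> polyring n" and B: "B \<subseteq> polyring n"
    and AB: "\<forall>x\<in>A. \<forall>y\<in>B. x * y \<in> (L :: 'a::comm_ring_1 mpol set)"
    and a: "a \<in> ideal_gen n A" and b: "b \<in> ideal_gen n B"
  shows "a * b \<in> L"
proof -
  \<comment> \<open>Generator-wise, through the colon ideals {x. x * c \<in> L}: first for c \<in> B, then for c = a.\<close>
  have "ideal_gen n A \<subseteq> {x\<in>polyring n. x * y \<in> L}" if "y \<in> B" for y
    using that A B AB by (intro ideal_gen_least is_ideal_colon L) auto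
  then have "B \<subseteq> {y\<in>polyring n. y * a \<in> L}"
    using a B by (auto simp: mult.commute)
  moreover have "a \<in> polyring n"
    using a ideal_gen_subset_polyring[OF A] by blast
  ultimately have "ideal_gen n B \<subseteq> {y\<in>polyring n. y * a \<in> L}"
    by (intro ideal_gen_least is_ideal_colon L)
  with b show ?thesis by (auto simp: mult.commute)
qed

lemma is_ideal_ideal_sum:
  "A \<subseteq> polyring n \<Longrightarrow> B \<subseteq> polyring n \<Longrightarrow> is_ideal n (ideal_sum n A (B :: 'a::comm_ring_1 mpol set))"
  unfolding ideal_sum_def by (simp add: is_ideal_ideal_gen)

lemma ideal_sum_subset_polyring:
  "A \<subseteq> polyring n \<Longrightarrow> B \<subseteq> polyring n \<Longrightarrow> ideal_sum n A (B :: 'a::comm_ring_1 mpol set) \<subseteq> polyring n"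
  unfolding ideal_sum_def by (simp add: ideal_gen_subset_polyring)

lemma ideal_sum_upper1:
  "A \<subseteq> polyring n \<Longrightarrow> B \<subseteq> polyring n \<Longrightarrow> A \<subseteq> ideal_sum n A (B :: 'a::comm_ring_1 mpol set)"
  unfolding ideal_sum_def using ideal_gen_subset[of "A \<union> B" n] by blast

lemma ideal_sum_upper2:
  "A \<subseteq> polyring n \<Longrightarrow> B \<subseteq> polyring n \<Longrightarrow> B \<subseteq> ideal_sum n A (B :: 'a::comm_ring_1 mpol set)"
  unfolding ideal_sum_def using ideal_gen_subset[of "A \<union> B" n] by blast

lemma ideal_sum_least: "is_ideal n L \<Longrightarrow> A \<subseteq> L \<Longrightarrow> B \<subseteq> L \<Longrightarrow> ideal_sum n A B \<subseteq> L"
  unfolding ideal_sum_def by (simp add: ideal_gen_least)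

lemma is_ideal_ideal_prod:
  assumes "A \<subseteq> polyring n" "B \<subseteq> polyring n"
  shows "is_ideal n (ideal_prod n A (B :: 'a::comm_ring_1 mpol set))"
  unfolding ideal_prod_def using assms polyring_mult
  by (intro is_ideal_ideal_gen) blast

lemma mult_mem_ideal_prod:
  assumes "A \<subseteq> polyring n" "B \<subseteq> polyring n" "a \<in> A" "b \<in> B"
  shows "a * b \<in> ideal_prod n A (B :: 'a::comm_ring_1 mpol set)"
  unfolding ideal_prod_def using assms polyring_mult
  by (intro subsetD[OF ideal_gen_subset]) blast+

lemma ideal_prod_ideal_gen_least:
  assumes "is_ideal n L" "A \<subseteq> polyring n" "B \<subseteq> polyring n" "\<forall>x\<in>A. \<forall>y\<in>B. x * y \<in> L"
  shows "ideal_prod n (ideal_gen n A) (ideal_gen n B) \<subseteq> (L :: 'a::comm_ring_1 mpol set)"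
  unfolding ideal_prod_def using ideal_gen_mult_mem[OF assms]
  by (intro ideal_gen_least[OF assms(1)]) blast

definition mval :: "monom \<Rightarrow> (nat \<Rightarrow> 'a::comm_semiring_1) \<Rightarrow> 'a" where
  "mval m v = (\<Prod>i\<in>Poly_Mapping.keys m. v i ^ Poly_Mapping.lookup m i)"

lemma eval_mval: "eval f v = (\<Sum>m\<in>Poly_Mapping.keys f. Poly_Mapping.lookup f m * mval m v)"
  by (simp add: eval_def mval_def)

lemma eval_superset:
  assumes "finite S" "Poly_Mapping.keys f \<subseteq> S"
  shows "eval f v = (\<Sum>m\<in>S. Poly_Mapping.lookup f m * mval m v)"
  unfolding eval_mval
  by (rule sum.mono_neutral_left) (use assms in \<open>auto simp: in_keys_iff\<close>)

lemma eval_add: "eval (f + g) v = eval f v + eval g v"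
proof -
  let ?S = "Poly_Mapping.keys f \<union> Poly_Mapping.keys g"
  have "eval (f + g) v = (\<Sum>m\<in>?S. Poly_Mapping.lookup (f + g) m * mval m v)"
    by (rule eval_superset[OF _ keys_add]) simp
  also have "\<dots> = (\<Sum>m\<in>?S. Poly_Mapping.lookup f m * mval m v) + (\<Sum>m\<in>?S. Poly_Mapping.lookup g m * mval m v)"
    by (simp add: lookup_add distrib_right sum.distrib)
  also have "\<dots> = eval f v + eval g v"
    using eval_superset[of ?S f v] eval_superset[of ?S g v] by simp
  finally show ?thesis .
qed

lemma eval_single: "eval (Poly_Mapping.single m c) v = c * mval m v"
  by (simp add: eval_mval)

lemma mval_eq_0: "i \<in> Poly_Mapping.keys m \<Longrightarrow> v i = 0 \<Longrightarrow> mval m v = 0"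
  unfolding mval_def
  by (rule prod_zero) (auto simp: in_keys_iff zero_power intro!: bexI[of _ i])

lemma eval_eq_0:
  assumes "\<forall>m\<in>Poly_Mapping.keys f. \<exists>i\<in>Poly_Mapping.keys m. v i = 0"
  shows "eval f v = 0"
  unfolding eval_mval using assms mval_eq_0 by (metis (no_types, lifting) mult_zero_right sum.neutral)

definition restr :: "(monom \<Rightarrow> bool) \<Rightarrow> 'a::zero mpol \<Rightarrow> 'a mpol" where
  "restr P f = Abs_poly_mapping (\<lambda>m. if P m then Poly_Mapping.lookup f m else 0)"

lemma lookup_restr: "Poly_Mapping.lookup (restr P f) = (\<lambda>m. if P m then Poly_Mapping.lookup f m else 0)"
proof -
  have "finite {m. (if P m then Poly_Mapping.lookup f m else 0) \<noteq> 0}"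
    by (rule rev_finite_subset[OF finite_lookup[of f]]) auto
  then show ?thesis
    unfolding restr_def by (rule lookup_Abs_poly_mapping)
qed

lemma keys_restr: "Poly_Mapping.keys (restr P f) = {m\<in>Poly_Mapping.keys f. P m}"
  by (auto simp: in_keys_iff lookup_restr split: if_splits)

lemma restr_add_restr_not: "restr P f + restr (\<lambda>m. \<not> P m) f = f"
  by (rule poly_mapping_eqI) (simp add: lookup_add lookup_restr)

lemma restr_in_polyring: "f \<in> polyring n \<Longrightarrow> restr P f \<in> polyring n"
  by (auto simp: polyring_iff keys_restr)

lemma eval_restr:
  assumes "\<forall>m\<in>Poly_Mapping.keys f. \<not> P m \<longrightarrow> (\<exists>i\<in>Poly_Mapping.keys m. v i = 0)"
  shows "eval (restr P f) v = eval f v"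
proof -
  have "eval (restr (\<lambda>m. \<not> P m) f) v = 0"
    using assms by (intro eval_eq_0) (auto simp: keys_restr)
  then show ?thesis
    using eval_add[of "restr P f" "restr (\<lambda>m. \<not> P m) f" v] by (simp add: restr_add_restr_not)
qed

lemma restr_mem_vanishing_ideal:
  assumes f: "f \<in> vanishing_ideal n W"
    and W: "\<forall>v\<in>W. \<forall>i\<in>{0..n} - V. v i = 0"
  shows "restr (\<lambda>m. Poly_Mapping.keys m \<subseteq> V) f \<in> vanishing_ideal n W \<inter> {g. poly_in V g}"
proof -
  have fp: "f \<in> polyring n"
    using f by (simp add: vanishing_ideal_def)
  have "eval (restr (\<lambda>m. Poly_Mapping.keys m \<subseteq> V) f) v = eval f v" if "v \<in> W" for v
    using that fp W by (intro eval_restr) (fastforce simp: polyring_iff)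
  then show ?thesis
    using f restr_in_polyring[OF fp]
    by (auto simp: vanishing_ideal_def poly_in_def keys_restr)
qed

lemma monomial_orderD:
  assumes "monomial_order n ord"
    and "Poly_Mapping.keys a \<subseteq> {0..n}" "Poly_Mapping.keys b \<subseteq> {0..n}"
  shows "ord a a"
    and "ord a b \<Longrightarrow> ord b a \<Longrightarrow> a = b"
    and "ord a b \<or> ord b a"
    and "Poly_Mapping.keys c \<subseteq> {0..n} \<Longrightarrow> ord a b \<Longrightarrow> ord b c \<Longrightarrow> ord a c"
  using assms unfolding monomial_order_def Let_def by blast+

lemma finite_total_has_greatest:
  assumes "finite S" "S \<noteq> {}"
    and total: "\<forall>a\<in>S. \<forall>b\<in>S. ord a b \<or> ord b a"
    and trans: "\<forall>a\<in>S. \<forall>b\<in>S. \<forall>c\<in>S. ord a b \<and> ord b c \<longrightarrow> ord a c"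
  shows "\<exists>m\<in>S. \<forall>m'\<in>S. ord m' m"
  using assms(1,2) total trans
proof (induction S rule: finite_ne_induct)
  case (singleton x)
  then show ?case by blast
next
  case (insert x F)
  have "\<forall>a\<in>F. \<forall>b\<in>F. ord a b \<or> ord b a"
    and "\<forall>a\<in>F. \<forall>b\<in>F. \<forall>c\<in>F. ord a b \<and> ord b c \<longrightarrow> ord a c"
    using insert.prems by blast+
  then obtain m where m: "m \<in> F" "\<forall>m'\<in>F. ord m' m"
    using insert.IH by blast
  show ?case
  proof (cases "ord x m")
    case True
    then show ?thesis using m by blast
  next
    case False
    then have "ord m x" "ord x x"
      using insert.prems(1) m(1) by blast+
    then have "\<forall>m'\<in>insert x F. ord m' x"
      using insert.prems(2) m by blast
    then show ?thesis by blast
  qed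
qed

lemma lead_monom_eqI:
  assumes mo: "monomial_order n ord" and f: "f \<in> polyring n"
    and m: "m \<in> Poly_Mapping.keys f" and greatest: "\<forall>m'\<in>Poly_Mapping.keys f. ord m' m"
  shows "lead_monom ord f = m"
  unfolding lead_monom_def
proof (rule the_equality)
  fix m' assume "m' \<in> Poly_Mapping.keys f \<and> (\<forall>m''\<in>Poly_Mapping.keys f. ord m'' m')"
  then show "m' = m"
    using monomial_orderD(2)[OF mo, of m' m] f m greatest unfolding polyring_iff by blast
qed (use m greatest in blast)

lemma lead_monom_greatest:
  assumes mo: "monomial_order n ord" and f: "f \<in> polyring n" "f \<noteq> 0"
  shows "lead_monom ord f \<in> Poly_Mapping.keys f"
    and "\<forall>m\<in>Poly_Mapping.keys f. ord m (lead_monom ord f)"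
proof -
  have K: "\<forall>m\<in>Poly_Mapping.keys f. Poly_Mapping.keys m \<subseteq> {0..n}"
    using f polyring_iff by blast
  have "\<exists>m\<in>Poly_Mapping.keys f. \<forall>m'\<in>Poly_Mapping.keys f. ord m' m"
  proof (rule finite_total_has_greatest)
    show "Poly_Mapping.keys f \<noteq> {}"
      using f(2) by simp
    show "\<forall>a\<in>Poly_Mapping.keys f. \<forall>b\<in>Poly_Mapping.keys f. ord a b \<or> ord b a"
      using K monomial_orderD(3)[OF mo] by blast
    show "\<forall>a\<in>Poly_Mapping.keys f. \<forall>b\<in>Poly_Mapping.keys f. \<forall>c\<in>Poly_Mapping.keys f.
        ord a b \<and> ord b c \<longrightarrow> ord a c"
      using K monomial_orderD(4)[OF mo] by blast
  qed simp
  with lead_monom_eqI[OF mo f(1)] show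
    "lead_monom ord f \<in> Poly_Mapping.keys f" "\<forall>m\<in>Poly_Mapping.keys f. ord m (lead_monom ord f)"
    by auto
qed

lemma lead_monom_single:
  "monomial_order n ord \<Longrightarrow> Poly_Mapping.keys m \<subseteq> {0..n} \<Longrightarrow>
    lead_monom ord (Poly_Mapping.single m (1::'a::zero_neq_one)) = m"
  by (rule lead_monom_eqI) (auto simp: single_in_polyring monomial_orderD(1))

lemma lead_monom_restr:
  assumes mo: "monomial_order n ord" and f: "f \<in> polyring n" "f \<noteq> 0"
    and P: "P (lead_monom ord f)"
  shows "lead_monom ord (restr P f) = lead_monom ord f" and "restr P f \<noteq> 0"
proof -
  have lead: "lead_monom ord f \<in> Poly_Mapping.keys (restr P f)"
    using lead_monom_greatest(1)[OF mo f] P by (simp add: keys_restr)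
  then show "restr P f \<noteq> 0"
    by auto
  show "lead_monom ord (restr P f) = lead_monom ord f"
    using lead lead_monom_greatest(2)[OF mo f] restr_in_polyring[OF f(1)]
    by (auto simp: keys_restr intro: lead_monom_eqI[OF mo])
qed

lemma initial_ideal_generators_subset_polyring:
  assumes "monomial_order n ord" "I \<subseteq> polyring n"
  shows "{Poly_Mapping.single (lead_monom ord f) (1::'a::comm_ring_1) | f. f \<in> I \<and> f \<noteq> 0} \<subseteq> polyring n"
proof (rule subsetI, elim CollectE exE conjE)
  fix x f assume x: "x = Poly_Mapping.single (lead_monom ord f) (1::'a)" and f: "f \<in> I" "f \<noteq> 0"
  then have "f \<in> polyring n" "lead_monom ord f \<in> Poly_Mapping.keys f"
    using assms lead_monom_greatest(1)[OF assms(1), of f] by blast+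
  then show "x \<in> polyring n"
    unfolding x by (simp add: polyring_iff)
qed

lemma is_ideal_initial_ideal:
  "monomial_order n ord \<Longrightarrow> I \<subseteq> polyring n \<Longrightarrow> is_ideal n (initial_ideal n ord (I :: 'a::comm_ring_1 mpol set))"
  unfolding initial_ideal_def by (intro is_ideal_ideal_gen initial_ideal_generators_subset_polyring)

lemma initial_ideal_subset_polyring:
  "monomial_order n ord \<Longrightarrow> I \<subseteq> polyring n \<Longrightarrow> initial_ideal n ord (I :: 'a::comm_ring_1 mpol set) \<subseteq> polyring n"
  using is_ideal_initial_ideal[of n ord I] by (simp add: is_ideal_def)

lemma lead_monom_mem_initial_ideal:
  assumes "monomial_order n ord" "I \<subseteq> polyring n" "f \<in> I" "f \<noteq> 0"
  shows "Poly_Mapping.single (lead_monom ord f) 1 \<in> initial_ideal n ord (I :: 'a::comm_ring_1 mpol set)"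
  unfolding initial_ideal_def
  using assms ideal_gen_subset[OF initial_ideal_generators_subset_polyring[OF assms(1,2)]] by blast

lemma initial_ideal_least:
  assumes "is_ideal n J" "\<And>f. f \<in> I \<Longrightarrow> f \<noteq> 0 \<Longrightarrow> Poly_Mapping.single (lead_monom ord f) 1 \<in> J"
  shows "initial_ideal n ord I \<subseteq> J"
  unfolding initial_ideal_def using assms by (intro ideal_gen_least) auto

lemma initial_ideal_mono: "I \<subseteq> J \<Longrightarrow> initial_ideal n ord I \<subseteq> initial_ideal n ord J"
  unfolding initial_ideal_def by (rule ideal_gen_mono) blast

lemma Var_mult_Var:
  "Var i * Var j = (Poly_Mapping.single (Poly_Mapping.single i 1 + Poly_Mapping.single j 1) 1 :: 'a::comm_semiring_1 mpol)"
  by (simp add: Var_def mult_single)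

lemma keys_single_add_single:
  "i \<noteq> j \<Longrightarrow> Poly_Mapping.keys (Poly_Mapping.single i (1::nat) + Poly_Mapping.single j 1) = {i, j}"
  by (auto simp: in_keys_iff lookup_add lookup_single when_def split: if_splits)

lemma single_eq_mult_Var_mult_Var:
  assumes "i \<in> Poly_Mapping.keys m" "j \<in> Poly_Mapping.keys m" "i \<noteq> j"
  shows "Poly_Mapping.single m 1 =
    Poly_Mapping.single (m - Poly_Mapping.single i 1 - Poly_Mapping.single j 1) 1 *
      (Var i * Var j :: 'a::comm_semiring_1 mpol)"
proof -
  have "m = (m - Poly_Mapping.single i 1 - Poly_Mapping.single j 1) +
      (Poly_Mapping.single i 1 + Poly_Mapping.single j 1)"
    using assms by (intro poly_mapping_eqI) (auto simp: lookup_add lookup_minus lookup_single in_keys_iff when_def)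
  then show ?thesis
    by (metis Var_mult_Var mult_single mult_1)
qed

lemma Var_mult_Var_mem_vanishing_ideal:
  assumes "i \<noteq> j" "i \<le> n" "j \<le> n" "\<forall>v\<in>W. v i = 0 \<or> v j = 0"
  shows "Var i * Var j \<in> vanishing_ideal n W"
proof -
  let ?e = "Poly_Mapping.single i (1::nat) + Poly_Mapping.single j 1"
  have "Poly_Mapping.keys ?e = {i, j}"
    using assms(1) by (rule keys_single_add_single)
  then have "Poly_Mapping.single ?e 1 \<in> vanishing_ideal n W"
    using assms(2-4) mval_eq_0[of _ ?e]
    by (auto simp: vanishing_ideal_def eval_single intro: single_in_polyring)
  then show ?thesis
    by (simp add: Var_mult_Var)
qed

lemma mval_scale: "mval m (\<lambda>i. t * v i) = t ^ mdeg m * mval m v"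
  by (simp add: mval_def mdeg_def power_mult_distrib prod.distrib power_sum)

lemma eval_scale_homogeneous:
  assumes "\<forall>m\<in>Poly_Mapping.keys f. mdeg m = d"
  shows "eval f (\<lambda>i. t * v i) = t ^ d * eval f v"
proof -
  have "eval f (\<lambda>i. t * v i) = (\<Sum>m\<in>Poly_Mapping.keys f. t ^ d * (Poly_Mapping.lookup f m * mval m v))"
    unfolding eval_mval using assms by (intro sum.cong) (auto simp: mval_scale mult_ac)
  also have "\<dots> = t ^ d * eval f v"
    by (simp add: eval_mval sum_distrib_left)
  finally show ?thesis .
qed

lemma proj_closed_scale:
  fixes Y :: "(nat \<Rightarrow> 'a::idom) set"
  assumes Y: "proj_closed n Y" and v: "v \<in> Y" and t: "t \<noteq> 0"
  shows "(\<lambda>i. t * v i) \<in> Y"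
proof -
  obtain S where S: "\<forall>f\<in>S. homogeneous f" "Y = {v\<in>proj_pts n. \<forall>f\<in>S. eval f v = 0}"
    using Y unfolding proj_closed_def by blast
  have "(\<lambda>i. t * v i) \<in> proj_pts n"
    using v t S(2) by (auto simp: proj_pts_def fun_eq_iff)
  moreover have "eval f (\<lambda>i. t * v i) = 0" if "f \<in> S" for f
    using that v S eval_scale_homogeneous[of f _ t v] unfolding homogeneous_def by auto
  ultimately show ?thesis
    using S(2) by blast
qed

lemma mval_single_var: "Poly_Mapping.keys m \<subseteq> {l} \<Longrightarrow> mval m v = v l ^ Poly_Mapping.lookup m l"
  by (cases "Poly_Mapping.keys m = {}") (auto simp: mval_def subset_singleton_iff)

text \<open>Where the variables of V other than x_l vanish, g in k[x_i : i in V] is a univariate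
  polynomial in x_l; as Y is a cone through p, it has every nonzero scalar as a root.\<close>

lemma vanishing_ideal_eval_on_axis:
  fixes Y :: "(nat \<Rightarrow> 'a::field) set"
  assumes inf: "infinite (UNIV :: 'a set)"
    and Y: "proj_closed n Y" and p: "p \<in> Y" "p l \<noteq> 0" "\<forall>j\<in>V - {l}. j \<le> n \<longrightarrow> p j = 0"
    and g: "g \<in> vanishing_ideal n Y" "poly_in V g"
    and v: "\<forall>j\<in>V - {l}. j \<le> n \<longrightarrow> v j = 0"
  shows "eval g v = 0"
proof -
  have gp: "g \<in> polyring n"
    using g(1) by (simp add: vanishing_ideal_def)
  define K where "K = {m\<in>Poly_Mapping.keys g. Poly_Mapping.keys m \<subseteq> {l}}"
  define Q where "Q = (\<Sum>m\<in>K. Polynomial.monom (Poly_Mapping.lookup g m) (Poly_Mapping.lookup m l))"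
  have eval_eq_poly: "eval g w = poly Q (w l)" if w: "\<forall>j\<in>V - {l}. j \<le> n \<longrightarrow> w j = 0" for w
  proof -
    have "eval g w = eval (restr (\<lambda>m. Poly_Mapping.keys m \<subseteq> {l}) g) w"
      using gp g(2) w by (intro eval_restr[symmetric]) (fastforce simp: polyring_iff poly_in_def)
    also have "\<dots> = (\<Sum>m\<in>K. Poly_Mapping.lookup g m * w l ^ Poly_Mapping.lookup m l)"
      unfolding eval_mval keys_restr K_def
      by (intro sum.cong) (auto simp: lookup_restr mval_single_var)
    also have "\<dots> = poly Q (w l)"
      by (simp add: Q_def poly_sum poly_monom)
    finally show ?thesis .
  qed
  have "poly Q s = 0" if "s \<noteq> 0" for s
  proof -
    define w where "w = (\<lambda>i. (s / p l) * p i)"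
    have "w \<in> Y"
      unfolding w_def using that p(2) by (intro proj_closed_scale[OF Y p(1)]) simp
    then have "eval g w = 0"
      using g(1) by (simp add: vanishing_ideal_def)
    moreover have "w l = s"
      using p(2) by (simp add: w_def)
    ultimately show ?thesis
      using eval_eq_poly[of w] p(3) by (simp add: w_def)
  qed
  then have "UNIV - {0} \<subseteq> {s. poly Q s = 0}"
    by blast
  moreover have "infinite (UNIV - {0 :: 'a})"
    using inf by simp
  ultimately have "Q = 0"
    using poly_roots_finite[of Q] finite_subset by blast
  then show ?thesis
    using eval_eq_poly[OF v] by simp
qed

lemma vanishing_ideal_restrict_subset:
  fixes Y :: "(nat \<Rightarrow> 'a::field) set"
  assumes "infinite (UNIV :: 'a set)"
    and "proj_closed n Y" "p \<in> Y" "p l \<noteq> 0" "\<forall>j\<in>V - {l}. j \<le> n \<longrightarrow> p j = 0"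
    and Z: "\<forall>v\<in>Z. \<forall>j\<in>V - {l}. j \<le> n \<longrightarrow> v j = 0"
  shows "vanishing_ideal n Y \<inter> {g. poly_in V g} \<subseteq> vanishing_ideal n Z"
  using vanishing_ideal_eval_on_axis[OF assms(1-5)] Z
  by (auto simp: vanishing_ideal_def)

lemma lead_monom_mem_initial_ideal_restrict:
  assumes mo: "monomial_order n ord"
    and f: "f \<in> vanishing_ideal n W" "f \<noteq> 0"
    and W: "\<forall>v\<in>W. \<forall>i\<in>{0..n} - V. v i = 0"
    and V: "Poly_Mapping.keys (lead_monom ord f) \<subseteq> V"
  shows "Poly_Mapping.single (lead_monom ord f) 1 \<in> initial_ideal n ord (vanishing_ideal n W \<inter> {g. poly_in V g})"
proof -
  let ?g = "restr (\<lambda>m. Poly_Mapping.keys m \<subseteq> V) f"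
  have fp: "f \<in> polyring n"
    using f(1) vanishing_ideal_subset_polyring by blast
  have g: "?g \<in> vanishing_ideal n W \<inter> {g. poly_in V g}"
    using f(1) W by (rule restr_mem_vanishing_ideal)
  have lead: "lead_monom ord ?g = lead_monom ord f" and nz: "?g \<noteq> 0"
    using lead_monom_restr[OF mo fp f(2), of "\<lambda>m. Poly_Mapping.keys m \<subseteq> V"] V by auto
  have "Poly_Mapping.single (lead_monom ord ?g) 1 \<in> initial_ideal n ord (vanishing_ideal n W \<inter> {g. poly_in V g})"
    using vanishing_ideal_subset_polyring g nz by (intro lead_monom_mem_initial_ideal[OF mo]) blast+
  then show ?thesis
    by (simp only: lead)
qed

lemma single_mem_ideal_prod_Vars:
  assumes "l \<le> n" "Poly_Mapping.keys m \<subseteq> {0..n}"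
    and i: "i \<in> Poly_Mapping.keys m" "i < l" and j: "j \<in> Poly_Mapping.keys m" "l < j"
  shows "Poly_Mapping.single m (1::'a::comm_ring_1) \<in>
    ideal_prod n (ideal_gen n {Var i | i. i < l}) (ideal_gen n {Var j | j. l < j \<and> j \<le> n})"
proof -
  let ?A = "{Var i :: 'a mpol | i. i < l}" and ?B = "{Var j :: 'a mpol | j. l < j \<and> j \<le> n}"
  let ?T = "ideal_prod n (ideal_gen n ?A) (ideal_gen n ?B)"
  have A: "?A \<subseteq> polyring n" and B: "?B \<subseteq> polyring n"
    using assms(1) by (auto intro!: Var_in_polyring)
  have "j \<le> n"
    using j(1) assms(2) by auto
  then have "Var j \<in> ideal_gen n ?B"
    using j(2) ideal_gen_subset[OF B] by blast
  moreover have "Var i \<in> ideal_gen n ?A"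
    using i(2) ideal_gen_subset[OF A] by blast
  ultimately have VV: "Var i * Var j \<in> ?T"
    by (intro mult_mem_ideal_prod ideal_gen_subset_polyring A B)
  have T: "is_ideal n ?T"
    by (intro is_ideal_ideal_prod ideal_gen_subset_polyring A B)
  have r: "Poly_Mapping.single (m - Poly_Mapping.single i 1 - Poly_Mapping.single j 1) (1::'a) \<in> polyring n"
    using assms(2) by (intro single_in_polyring) (auto simp: in_keys_iff lookup_minus)
  have "Poly_Mapping.single (m - Poly_Mapping.single i 1 - Poly_Mapping.single j 1) 1 *
      (Var i * Var j) \<in> ?T"
    by (rule is_ideal_mult_left[OF T VV r])
  moreover have "i \<noteq> j"
    using i j by simp
  ultimately show ?thesis
    using single_eq_mult_Var_mult_Var[OF i(1) j(1), where 'a = 'a] by simp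
qed

lemma initial_ideal_inter_subset:
  fixes Y Z :: "(nat \<Rightarrow> 'a::comm_ring_1) set"
  assumes mo: "monomial_order n ord" and "l \<le> n"
    and Y: "\<forall>v\<in>Y. \<forall>i<l. v i = 0"
    and Z: "\<forall>v\<in>Z. \<forall>i. l < i \<and> i \<le> n \<longrightarrow> v i = 0"
  shows "initial_ideal n ord (vanishing_ideal n Y \<inter> vanishing_ideal n Z) \<subseteq>
    ideal_sum n
      (ideal_sum n
        (initial_ideal n ord (vanishing_ideal n Y \<inter> {f. poly_in {l..n} f}))
        (initial_ideal n ord (vanishing_ideal n Z \<inter> {f. poly_in {0..l} f})))
      (ideal_prod n (ideal_gen n {Var i | i. i < l}) (ideal_gen n {Var j | j. l < j \<and> j \<le> n}))"
    (is "_ \<subseteq> ideal_sum n (ideal_sum n ?AY ?AZ) ?T")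
proof -
  have A: "{Var i :: 'a mpol | i. i < l} \<subseteq> polyring n" "{Var j :: 'a mpol | j. l < j \<and> j \<le> n} \<subseteq> polyring n"
    using assms(2) by (auto intro!: Var_in_polyring)
  have AY: "?AY \<subseteq> polyring n" and AZ: "?AZ \<subseteq> polyring n"
    using vanishing_ideal_subset_polyring by (intro initial_ideal_subset_polyring[OF mo]; blast)+
  have T: "?T \<subseteq> polyring n"
    using is_ideal_ideal_prod[OF ideal_gen_subset_polyring ideal_gen_subset_polyring, OF A]
    by (simp add: is_ideal_def)
  have S: "ideal_sum n ?AY ?AZ \<subseteq> polyring n"
    by (rule ideal_sum_subset_polyring[OF AY AZ])
  have R: "is_ideal n (ideal_sum n (ideal_sum n ?AY ?AZ) ?T)"
    by (rule is_ideal_ideal_sum[OF S T])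
  have sub: "?AY \<subseteq> ideal_sum n (ideal_sum n ?AY ?AZ) ?T" "?AZ \<subseteq> ideal_sum n (ideal_sum n ?AY ?AZ) ?T"
      "?T \<subseteq> ideal_sum n (ideal_sum n ?AY ?AZ) ?T"
    using ideal_sum_upper1[OF AY AZ] ideal_sum_upper2[OF AY AZ]
      ideal_sum_upper1[OF S T] ideal_sum_upper2[OF S T] by blast+
  show ?thesis
  proof (rule initial_ideal_least[OF R])
    fix f assume f: "f \<in> vanishing_ideal n Y \<inter> vanishing_ideal n Z" "f \<noteq> 0"
    let ?m = "lead_monom ord f"
    have "f \<in> polyring n"
      using f(1) vanishing_ideal_subset_polyring by blast
    then have m: "Poly_Mapping.keys ?m \<subseteq> {0..n}"
      using lead_monom_greatest(1)[OF mo _ f(2)] by (auto simp: polyring_iff)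
    consider "Poly_Mapping.keys ?m \<subseteq> {l..n}" | "Poly_Mapping.keys ?m \<subseteq> {0..l}"
      | i j where "i \<in> Poly_Mapping.keys ?m" "i < l" "j \<in> Poly_Mapping.keys ?m" "l < j"
    proof -
      have "Poly_Mapping.keys ?m \<subseteq> {l..n} \<or> Poly_Mapping.keys ?m \<subseteq> {0..l} \<or>
          (\<exists>i\<in>Poly_Mapping.keys ?m. i < l) \<and> (\<exists>j\<in>Poly_Mapping.keys ?m. l < j)"
        using m by (auto simp: subset_iff not_le)
      then show ?thesis
        using that by blast
    qed
    then show "Poly_Mapping.single ?m 1 \<in> ideal_sum n (ideal_sum n ?AY ?AZ) ?T"
    proof cases
      case 1
      then have "Poly_Mapping.single ?m 1 \<in> ?AY"
        using f Y by (intro lead_monom_mem_initial_ideal_restrict[OF mo]) auto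
      then show ?thesis using sub by blast
    next
      case 2
      then have "Poly_Mapping.single ?m 1 \<in> ?AZ"
        using f Z by (intro lead_monom_mem_initial_ideal_restrict[OF mo]) auto
      then show ?thesis using sub by blast
    next
      case 3
      then have "Poly_Mapping.single ?m 1 \<in> ?T"
        using assms(2) m by (intro single_mem_ideal_prod_Vars)
      then show ?thesis using sub by blast
    qed
  qed
qed

lemma initial_ideal_inter_supset:
  fixes Y Z :: "(nat \<Rightarrow> 'a::field) set"
  assumes inf: "infinite (UNIV :: 'a set)" and mo: "monomial_order n ord" and "l \<le> n"
    and Yc: "proj_closed n Y" and Zc: "proj_closed n Z"
    and Y: "\<forall>v\<in>Y. \<forall>i<l. v i = 0"
    and Z: "\<forall>v\<in>Z. \<forall>i. l < i \<and> i \<le> n \<longrightarrow> v i = 0"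
    and p: "p \<in> Y" "p \<in> Z" "p l \<noteq> 0"
  shows "ideal_sum n
      (ideal_sum n
        (initial_ideal n ord (vanishing_ideal n Y \<inter> {f. poly_in {l..n} f}))
        (initial_ideal n ord (vanishing_ideal n Z \<inter> {f. poly_in {0..l} f})))
      (ideal_prod n (ideal_gen n {Var i | i. i < l}) (ideal_gen n {Var j | j. l < j \<and> j \<le> n}))
    \<subseteq> initial_ideal n ord (vanishing_ideal n Y \<inter> vanishing_ideal n Z)"
    (is "_ \<subseteq> ?L")
proof -
  let ?IY = "vanishing_ideal n Y" and ?IZ = "vanishing_ideal n Z"
  have L: "is_ideal n ?L"
    using vanishing_ideal_subset_polyring by (intro is_ideal_initial_ideal[OF mo]) blast
  have "?IY \<inter> {f. poly_in {l..n} f} \<subseteq> ?IZ"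
    using p Z by (intro vanishing_ideal_restrict_subset[OF inf Yc]) auto
  then have AY: "initial_ideal n ord (?IY \<inter> {f. poly_in {l..n} f}) \<subseteq> ?L"
    by (intro initial_ideal_mono) blast
  have "?IZ \<inter> {f. poly_in {0..l} f} \<subseteq> ?IY"
    using p Y by (intro vanishing_ideal_restrict_subset[OF inf Zc]) auto
  then have AZ: "initial_ideal n ord (?IZ \<inter> {f. poly_in {0..l} f}) \<subseteq> ?L"
    by (intro initial_ideal_mono) blast
  have "Var i * Var j \<in> ?L" if "i < l" "l < j" "j \<le> n" for i j
  proof -
    let ?e = "Poly_Mapping.single i (1::nat) + Poly_Mapping.single j 1"
    have "Var i * Var j \<in> ?IY \<inter> ?IZ"
      using that Y Z assms(3) by (auto intro!: Var_mult_Var_mem_vanishing_ideal)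
    moreover have "Var i * Var j \<noteq> (0 :: 'a mpol)"
      by (metis Var_mult_Var keys_single keys_zero one_neq_zero singleton_iff empty_iff)
    moreover have "lead_monom ord (Var i * Var j :: 'a mpol) = ?e"
      using that keys_single_add_single[of i j]
      by (simp add: Var_mult_Var lead_monom_single[OF mo])
    ultimately show ?thesis
      using lead_monom_mem_initial_ideal[OF mo, of "?IY \<inter> ?IZ" "Var i * Var j"]
        vanishing_ideal_subset_polyring by (auto simp: Var_mult_Var)
  qed
  then have T: "ideal_prod n (ideal_gen n {Var i | i. i < l}) (ideal_gen n {Var j | j. l < j \<and> j \<le> n}) \<subseteq> ?L"
    using assms(3) by (intro ideal_prod_ideal_gen_least[OF L]) (auto intro!: Var_in_polyring)
  show ?thesis
    by (intro ideal_sum_least[OF L] AY AZ T)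
qed

theorem lemma3p1:
  fixes Y Z :: "(nat \<Rightarrow> 'a::{alg_closed_field, field_char_0}) set"
    and n l :: nat
    and ord :: "monom \<Rightarrow> monom \<Rightarrow> bool"
  assumes "0 < l" and "l < n"
    and "proj_closed n Y" and "proj_closed n Z"
    and "\<forall>v\<in>Y. \<forall>i<l. v i = 0"
    and "\<forall>v\<in>Z. \<forall>i. l < i \<and> i \<le> n \<longrightarrow> v i = 0"
    and "Y \<inter> Z \<noteq> {}"
    and "monomial_order n ord"
  shows "initial_ideal n ord (vanishing_ideal n Y \<inter> vanishing_ideal n Z) =
    ideal_sum n
      (ideal_sum n
        (initial_ideal n ord (vanishing_ideal n Y \<inter> {f. poly_in {l..n} f}))
        (initial_ideal n ord (vanishing_ideal n Z \<inter> {f. poly_in {0..l} f})))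
      (ideal_prod n (ideal_gen n {Var i | i. i < l}) (ideal_gen n {Var j | j. l < j \<and> j \<le> n}))"
proof -
  obtain p where p: "p \<in> Y" "p \<in> Z"
    using assms(7) by blast
  have proj: "p \<in> proj_pts n"
    using p(1) assms(3) by (auto simp: proj_closed_def)
  have off_l: "p j = 0" if "j \<noteq> l" for j
    using that p assms(5,6) proj by (cases "j < l"; cases "j \<le> n") (auto simp: proj_pts_def)
  have "p l \<noteq> 0"
  proof
    assume "p l = 0"
    with off_l have "p = (\<lambda>_. 0)"
      by (intro ext) metis
    with proj show False
      by (simp add: proj_pts_def)
  qed
  show ?thesis
    using assms(2-6,8) p \<open>p l \<noteq> 0\<close> infinite_UNIV_char_0[where 'a = 'a]
    by (intro equalityI initial_ideal_inter_subset initial_ideal_inter_supset) auto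
qed

end
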